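(* For $n\ge2$ and $u_1,\dots,u_n\in\mathcal B$, $\langle X(u_1)\cdots X(u_n)\Omega,\Omega\rangle_{\gamma,\phi}=\sum_{\pi\in\mathrm{NC}_{ns}(n)}\langle W_M(\pi)\Omega,\Omega\rangle_{\gamma,\phi}$, and for $n=1$, $\langle X(u_1)\Omega,\Omega\rangle_{\gamma,\phi}=0$.
   Context: Let $\mathcal B$ be a unital $*$-algebra with star-linear maps $\phi:\mathcal B\to\mathbb C$, $\gamma:\mathcal B\to\mathcal B$, $\Lambda:\mathcal B\otimes_{alg}\mathcal B\to\mathcal B$, where $\phi$ is positive and faithful and $\gamma+\phi$ is completely positive, with $(\gamma+\phi)[b]:=\gamma[b]+\phi[b]1_{\mathcal B}$. Assume $\phi[v^*\Lambda(b\otimes u)]=\phi[\Lambda(b^*\otimes v)^*u]$ and $\gamma[v^*\Lambda(b\otimes u)]=\gamma[\Lambda(b^*\otimes v)^*u]$ for all $b,u,v$. On $\mathcal F_{alg}(\mathcal B)=\mathbb C\Omega\oplus\bigoplus_{n\ge1}\mathcal B^{\otimes n}$ use the form $\langle\Omega,\Omega\rangle_{\gamma,\phi}=1$, $\langle u_1\otimes\cdots\otimes u_n,v_1\otimes\cdots\otimes v_k\rangle_{\gamma,\phi}=\delta_{n=k}\phi[v_n^*(\gamma+\phi)[v_{n-1}^*\cdots(\gamma+\phi)[v_1^*u_1]\cdots u_{n-1}]u_n]$. For $b\in\mathcal B$ define operators on $\mathcal F_{alg}(\mathcal B)$: $a^+(b)\Omega=b$, $a^+(b)(u_1\otimes\cdots\otimes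 u_n)=b\otimes u_1\otimes\cdots\otimes u_n$; $a^-(b)\Omega=0$, $a^-(b)u_1=\phi[bu_1]\Omega$, $a^-(b)(u_1\otimes\cdots\otimes u_n)=(\gamma+\phi)[bu_1]u_2\otimes\cdots\otimes u_n$ for $n\ge2$; $a^0(b)\Omega=0$, $a^0(b)(u_1\otimes\cdots\otimes u_n)=\Lambda(b\otimes u_1)\otimes u_2\otimes\cdots\otimes u_n$; and $X(b)=a^+(b)+a^-(b)+a^0(b)$. $\mathrm{NC}(n)$ is the set of noncrossing partitions of $\{1,\dots,n\}$; $\mathrm{NC}_{ns}(n)$ those with no singleton blocks. In a block, the smallest element is opening, the largest closing, others middle. For $\pi\in\mathrm{NC}_{ns}(n)$, $W_M(\pi)=a_1(u_1)a_2(u_2)\cdots a_n(u_n)$ where $a_i=a^-$ if $i$ is opening, $a^+$ if $i$ is closing, $a^0$ if $i$ is middle. *)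

theory Defs
  imports Complex_Main "HOL-Library.Disjoint_Sets"
begin

definition star_alg :: "(complex \<Rightarrow> 'b::ring_1 \<Rightarrow> 'b) \<Rightarrow> ('b \<Rightarrow> 'b) \<Rightarrow> bool" where
  "star_alg sc st \<longleftrightarrow>
    (\<forall>a b x y. sc a (x + y) = sc a x + sc a y \<and> sc (a + b) x = sc a x + sc b x
       \<and> sc (a * b) x = sc a (sc b x) \<and> sc 1 x = x
       \<and> sc a (x * y) = sc a x * y \<and> sc a (x * y) = x * sc a y
       \<and> st (st x) = x \<and> st (x + y) = st x + st y
       \<and> st (sc a x) = sc (cnj a) (st x) \<and> st (x * y) = st y * st x)"

definition star_linear_functional ::
  "(complex \<Rightarrow> 'b::ring_1 \<Rightarrow> 'b) \<Rightarrow> ('b \<Rightarrow> 'b) \<Rightarrow> ('b \<Rightarrow> complex) \<Rightarrow> bool" where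
  "star_linear_functional sc st f \<longleftrightarrow>
    (\<forall>a x y. f (x + y) = f x + f y \<and> f (sc a x) = a * f x \<and> f (st x) = cnj (f x))"

definition star_linear_map ::
  "(complex \<Rightarrow> 'b::ring_1 \<Rightarrow> 'b) \<Rightarrow> ('b \<Rightarrow> 'b) \<Rightarrow> ('b \<Rightarrow> 'b) \<Rightarrow> bool" where
  "star_linear_map sc st g \<longleftrightarrow>
    (\<forall>a x y. g (x + y) = g x + g y \<and> g (sc a x) = sc a (g x) \<and> g (st x) = st (g x))"

text \<open>A linear map on the algebraic tensor product B \<otimes> B is the same as a bilinear map
B \<times> B \<rightarrow> B; the star on B \<otimes> B is (b \<otimes> u)* = b* \<otimes> u*.\<close>

definition star_bilinear_map ::
  "(complex \<Rightarrow> 'b::ring_1 \<Rightarrow> 'b) \<Rightarrow> ('b \<Rightarrow> 'b) \<Rightarrow> ('b \<Rightarrow> 'b \<Rightarrow> 'b) \<Rightarrow> bool" where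
  "star_bilinear_map sc st L \<longleftrightarrow>
    (\<forall>a x y z. L (x + y) z = L x z + L y z \<and> L z (x + y) = L z x + L z y
       \<and> L (sc a x) y = sc a (L x y) \<and> L x (sc a y) = sc a (L x y)
       \<and> L (st x) (st y) = st (L x y))"

definition positive_functional :: "('b::ring_1 \<Rightarrow> 'b) \<Rightarrow> ('b \<Rightarrow> complex) \<Rightarrow> bool" where
  "positive_functional st f \<longleftrightarrow> (\<forall>b. f (st b * b) \<in> \<real> \<and> 0 \<le> Re (f (st b * b)))"

definition faithful_functional :: "('b::ring_1 \<Rightarrow> 'b) \<Rightarrow> ('b \<Rightarrow> complex) \<Rightarrow> bool" where
  "faithful_functional st f \<longleftrightarrow> (\<forall>b. f (st b * b) = 0 \<longrightarrow> b = 0)"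

definition positive_elem :: "('b::ring_1 \<Rightarrow> 'b) \<Rightarrow> 'b \<Rightarrow> bool" where
  "positive_elem st x \<longleftrightarrow> (\<exists>cs :: 'b list. x = sum_list (map (\<lambda>c. st c * c) cs))"

definition completely_positive :: "('b::ring_1 \<Rightarrow> 'b) \<Rightarrow> ('b \<Rightarrow> 'b) \<Rightarrow> bool" where
  "completely_positive st T \<longleftrightarrow>
    (\<forall>as bs :: 'b list. length as = length bs \<longrightarrow>
       positive_elem st (\<Sum>i<length as. \<Sum>j<length as.
          st (bs ! i) * T (st (as ! i) * as ! j) * bs ! j))"

text \<open>(\<gamma>+\<phi>)[b] = \<gamma>[b] + \<phi>[b] 1.\<close>

definition gp :: "(complex \<Rightarrow> 'b::ring_1 \<Rightarrow> 'b) \<Rightarrow> ('b \<Rightarrow> complex) \<Rightarrow> ('b \<Rightarrow> 'b) \<Rightarrow> 'b \<Rightarrow> 'b" where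
  "gp sc phi gam b = gam b + sc (phi b) 1"

text \<open>A simple tensor u_1 \<otimes> ... \<otimes> u_n is represented by the list [u_1,...,u_n];
the empty list is the vacuum \<Omega>. A vector of the algebraic Fock space is represented
as a formal finite linear combination of simple tensors, i.e. a list of
(coefficient, word) pairs. All operators and the form below are multilinear in the
tensor entries, hence compatible with the algebraic tensor product.\<close>

type_synonym 'b fvec = "(complex \<times> 'b list) list"

definition vac :: "'b fvec" where "vac = [(1, [])]"

fun ip_aux :: "(complex \<Rightarrow> 'b::ring_1 \<Rightarrow> 'b) \<Rightarrow> ('b \<Rightarrow> 'b) \<Rightarrow> ('b \<Rightarrow> complex) \<Rightarrow> ('b \<Rightarrow> 'b)
    \<Rightarrow> 'b \<Rightarrow> ('b \<times> 'b) list \<Rightarrow> 'b" where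
  "ip_aux sc st phi gam r [] = r"
| "ip_aux sc st phi gam r ((u, v) # ps) = ip_aux sc st phi gam (st v * gp sc phi gam r * u) ps"

text \<open>\<langle>u_1\<otimes>...\<otimes>u_n, v_1\<otimes>...\<otimes>v_k\<rangle> =
  \<delta>_{n=k} \<phi>[v_n* (\<gamma>+\<phi>)[v_{n-1}* ... (\<gamma>+\<phi>)[v_1* u_1] ... u_{n-1}] u_n].\<close>

fun word_inner :: "(complex \<Rightarrow> 'b::ring_1 \<Rightarrow> 'b) \<Rightarrow> ('b \<Rightarrow> 'b) \<Rightarrow> ('b \<Rightarrow> complex) \<Rightarrow> ('b \<Rightarrow> 'b)
    \<Rightarrow> 'b list \<Rightarrow> 'b list \<Rightarrow> complex" where
  "word_inner sc st phi gam [] [] = 1"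
| "word_inner sc st phi gam (u # us) (v # vs) =
     (if length us = length vs then phi (ip_aux sc st phi gam (st v * u) (zip us vs)) else 0)"
| "word_inner sc st phi gam _ _ = 0"

definition fock_inner :: "(complex \<Rightarrow> 'b::ring_1 \<Rightarrow> 'b) \<Rightarrow> ('b \<Rightarrow> 'b) \<Rightarrow> ('b \<Rightarrow> complex) \<Rightarrow> ('b \<Rightarrow> 'b)
    \<Rightarrow> 'b fvec \<Rightarrow> 'b fvec \<Rightarrow> complex" where
  "fock_inner sc st phi gam xs ys =
     (\<Sum>p\<leftarrow>xs. \<Sum>q\<leftarrow>ys. fst p * cnj (fst q) * word_inner sc st phi gam (snd p) (snd q))"

definition lin_ext :: "('b list \<Rightarrow> 'b fvec) \<Rightarrow> 'b fvec \<Rightarrow> 'b fvec" where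
  "lin_ext f xs = concat (map (\<lambda>p. map (\<lambda>q. (fst p * fst q, snd q)) (f (snd p))) xs)"

fun cre_w :: "'b \<Rightarrow> 'b list \<Rightarrow> 'b fvec" where
  "cre_w b w = [(1, b # w)]"

fun ann_w :: "(complex \<Rightarrow> 'b::ring_1 \<Rightarrow> 'b) \<Rightarrow> ('b \<Rightarrow> 'b) \<Rightarrow> ('b \<Rightarrow> complex) \<Rightarrow> ('b \<Rightarrow> 'b)
    \<Rightarrow> 'b \<Rightarrow> 'b list \<Rightarrow> 'b fvec" where
  "ann_w sc st phi gam b [] = []"
| "ann_w sc st phi gam b [u] = [(phi (b * u), [])]"
| "ann_w sc st phi gam b (u1 # u2 # us) = [(1, (gp sc phi gam (b * u1) * u2) # us)]"

fun pres_w :: "('b \<Rightarrow> 'b \<Rightarrow> 'b) \<Rightarrow> 'b \<Rightarrow> 'b list \<Rightarrow> 'b fvec" where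
  "pres_w Lam b [] = []"
| "pres_w Lam b (u # us) = [(1, Lam b u # us)]"

definition cre :: "'b \<Rightarrow> 'b fvec \<Rightarrow> 'b fvec" where
  "cre b = lin_ext (cre_w b)"

definition ann :: "(complex \<Rightarrow> 'b::ring_1 \<Rightarrow> 'b) \<Rightarrow> ('b \<Rightarrow> 'b) \<Rightarrow> ('b \<Rightarrow> complex) \<Rightarrow> ('b \<Rightarrow> 'b)
    \<Rightarrow> 'b \<Rightarrow> 'b fvec \<Rightarrow> 'b fvec" where
  "ann sc st phi gam b = lin_ext (ann_w sc st phi gam b)"

definition pres :: "('b \<Rightarrow> 'b \<Rightarrow> 'b) \<Rightarrow> 'b \<Rightarrow> 'b fvec \<Rightarrow> 'b fvec" where
  "pres Lam b = lin_ext (pres_w Lam b)"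

definition Xop :: "(complex \<Rightarrow> 'b::ring_1 \<Rightarrow> 'b) \<Rightarrow> ('b \<Rightarrow> 'b) \<Rightarrow> ('b \<Rightarrow> complex) \<Rightarrow> ('b \<Rightarrow> 'b)
    \<Rightarrow> ('b \<Rightarrow> 'b \<Rightarrow> 'b) \<Rightarrow> 'b \<Rightarrow> 'b fvec \<Rightarrow> 'b fvec" where
  "Xop sc st phi gam Lam b xs = cre b xs @ ann sc st phi gam b xs @ pres Lam b xs"

text \<open>Product of operators A_1 A_2 ... A_n applied to a vector (A_n acts first).\<close>

definition op_prod :: "('b fvec \<Rightarrow> 'b fvec) list \<Rightarrow> 'b fvec \<Rightarrow> 'b fvec" where
  "op_prod ops v = foldr (\<lambda>A w. A w) ops v"

definition noncrossing :: "nat set set \<Rightarrow> bool" where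
  "noncrossing P \<longleftrightarrow> (\<forall>B1\<in>P. \<forall>B2\<in>P. \<forall>a b c d. B1 \<noteq> B2 \<and> a < b \<and> b < c \<and> c < d
       \<and> a \<in> B1 \<and> c \<in> B1 \<and> b \<in> B2 \<and> d \<in> B2 \<longrightarrow> False)"

definition NC :: "nat \<Rightarrow> nat set set set" where
  "NC n = {P. partition_on {1..n} P \<and> noncrossing P}"

definition NC_ns :: "nat \<Rightarrow> nat set set set" where
  "NC_ns n = {P \<in> NC n. \<forall>B\<in>P. \<not> (\<exists>x. B = {x})}"

definition block_of :: "nat set set \<Rightarrow> nat \<Rightarrow> nat set" where
  "block_of P i = (THE B. B \<in> P \<and> i \<in> B)"

definition is_opening :: "nat set set \<Rightarrow> nat \<Rightarrow> bool" where
  "is_opening P i \<longleftrightarrow> i = Min (block_of P i)"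

definition is_closing :: "nat set set \<Rightarrow> nat \<Rightarrow> bool" where
  "is_closing P i \<longleftrightarrow> i = Max (block_of P i)"

definition WM_op :: "(complex \<Rightarrow> 'b::ring_1 \<Rightarrow> 'b) \<Rightarrow> ('b \<Rightarrow> 'b) \<Rightarrow> ('b \<Rightarrow> complex) \<Rightarrow> ('b \<Rightarrow> 'b)
    \<Rightarrow> ('b \<Rightarrow> 'b \<Rightarrow> 'b) \<Rightarrow> nat set set \<Rightarrow> nat \<Rightarrow> 'b \<Rightarrow> 'b fvec \<Rightarrow> 'b fvec" where
  "WM_op sc st phi gam Lam P i b =
     (if is_opening P i then ann sc st phi gam b
      else if is_closing P i then cre b else pres Lam b)"

definition WM :: "(complex \<Rightarrow> 'b::ring_1 \<Rightarrow> 'b) \<Rightarrow> ('b \<Rightarrow> 'b) \<Rightarrow> ('b \<Rightarrow> complex) \<Rightarrow> ('b \<Rightarrow> 'b)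
    \<Rightarrow> ('b \<Rightarrow> 'b \<Rightarrow> 'b) \<Rightarrow> nat \<Rightarrow> nat set set \<Rightarrow> (nat \<Rightarrow> 'b) \<Rightarrow> 'b fvec \<Rightarrow> 'b fvec" where
  "WM sc st phi gam Lam n P u = op_prod (map (\<lambda>i. WM_op sc st phi gam Lam P i (u i)) [1..<Suc n])"

end

theory Submission
  imports Defs
begin

(* Expanding X(u_i) = a^+(u_i) + a^-(u_i) + a^0(u_i) turns <X(u_1)...X(u_n)\<Omega>, \<Omega>> into a sum over
   all words in the three kinds of operators. Applied to \<Omega>, such a word gives 0 or one simple
   tensor whose length follows a Motzkin path read from the right, and it contributes to the
   vacuum component only if that path is balanced. Balanced words are exactly the words of
   roles (opening, closing, middle) of noncrossing partitions without singletons, each one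
   coming from a unique partition: the block containing the first closing point is an
   interval, so it can be read off from the roles, removed, and the argument repeated.
   The identity is purely combinatorial. *)

datatype role = Opening | Closing | Middle

definition block_role :: "nat set set \<Rightarrow> nat \<Rightarrow> role" where
  "block_role P i = (if is_opening P i then Opening else if is_closing P i then Closing else Middle)"

definition ncns_on :: "nat set \<Rightarrow> nat set set \<Rightarrow> bool" where
  "ncns_on S P \<longleftrightarrow> partition_on S P \<and> noncrossing P \<and> (\<forall>B\<in>P. \<not> (\<exists>x. B = {x}))"

lemma partition_on_block_subset: "partition_on S P \<Longrightarrow> B \<in> P \<Longrightarrow> B \<subseteq> S"
  by (auto dest: partition_onD1)

lemma partition_on_finite_block: "partition_on S P \<Longrightarrow> finite S \<Longrightarrow> B \<in> P \<Longrightarrow> finite B"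
  by (meson finite_subset partition_on_block_subset)

lemma partition_on_block_nonempty: "partition_on S P \<Longrightarrow> B \<in> P \<Longrightarrow> B \<noteq> {}"
  by (auto dest: partition_onD3)

lemma partition_on_block_disjoint:
  "partition_on S P \<Longrightarrow> B \<in> P \<Longrightarrow> B' \<in> P \<Longrightarrow> i \<in> B \<Longrightarrow> i \<in> B' \<Longrightarrow> B = B'"
  by (auto simp: partition_on_def disjoint_def)

lemma Min_less_Max_non_singleton:
  assumes "finite B" "B \<noteq> {}" "\<not> (\<exists>x. B = {x})"
  shows "Min B < Max B"
proof (rule ccontr)
  assume "\<not> Min B < Max B"
  then have "x = Min B" if "x \<in> B" for x
    using Min_le[OF assms(1) that] Max_ge[OF assms(1) that] by (simp add: not_less order_antisym_conv)
  then have "B = {Min B}" using Min_in[OF assms(1,2)] by blast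
  then show False using assms(3) by blast
qed

lemma ncns_on_partition_on: "ncns_on S P \<Longrightarrow> partition_on S P"
  by (simp add: ncns_on_def)

lemma NC_ns_iff_ncns_on: "P \<in> NC_ns n \<longleftrightarrow> ncns_on {1..n} P"
  by (simp add: NC_ns_def NC_def ncns_on_def)

lemma block_of_eq: "partition_on S P \<Longrightarrow> B \<in> P \<Longrightarrow> i \<in> B \<Longrightarrow> block_of P i = B"
  unfolding block_of_def by (rule the_equality) (auto simp: partition_on_def disjoint_def)

lemma block_role_in_block:
  "partition_on S P \<Longrightarrow> B \<in> P \<Longrightarrow> i \<in> B \<Longrightarrow>
    block_role P i = (if i = Min B then Opening else if i = Max B then Closing else Middle)"
  by (simp add: block_role_def is_opening_def is_closing_def block_of_eq)

lemma block_role_cong: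
  "partition_on S P \<Longrightarrow> partition_on S' Q \<Longrightarrow> B \<in> P \<Longrightarrow> B \<in> Q \<Longrightarrow> i \<in> B \<Longrightarrow>
    block_role P i = block_role Q i"
  by (simp add: block_role_in_block)

lemma block_role_subpartition:
  assumes "partition_on S P" "partition_on S' Q" "P \<subseteq> Q" "i \<in> S"
  shows "block_role Q i = block_role P i"
proof -
  obtain B where "B \<in> P" "i \<in> B" using assms(1,4) partition_onD1 by blast
  then show ?thesis using assms block_role_cong by blast
qed

lemma block_role_Min_Max:
  assumes "ncns_on S P" "finite S" "B \<in> P"
  shows "block_role P (Min B) = Opening" "block_role P (Max B) = Closing"
proof -
  have pa: "partition_on S P" and ns: "\<not> (\<exists>x. B = {x})"
    using assms(1,3) by (auto simp: ncns_on_def)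
  have fin: "finite B" and ne: "B \<noteq> {}"
    using partition_on_finite_block[OF pa assms(2,3)] partition_on_block_nonempty[OF pa assms(3)] .
  have "Min B < Max B" using Min_less_Max_non_singleton[OF fin ne ns] .
  then show "block_role P (Min B) = Opening" "block_role P (Max B) = Closing"
    using block_role_in_block[OF pa assms(3)] Min_in[OF fin ne] Max_in[OF fin ne] by auto
qed

lemma ncns_on_Diff_block:
  assumes nc: "ncns_on S P" and B: "B \<in> P"
  shows "ncns_on (S - B) (P - {B})"
proof -
  have pa: "partition_on S (insert B (P - {B}))" using nc B by (simp add: ncns_on_def insert_absorb)
  have "disjnt B (\<Union>(P - {B}))"
    using partition_on_block_disjoint[OF _ B] nc by (auto simp: ncns_on_def disjnt_def)
  then have "partition_on (S - B) (P - {B})" using pa partition_on_insert by blast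
  then show ?thesis using nc by (auto simp: ncns_on_def noncrossing_def)
qed

lemma ncns_on_insert_interval:
  assumes nc: "ncns_on S P" and fin: "finite B" and ne: "B \<noteq> {}" and ns: "\<not> (\<exists>x. B = {x})"
    and outside: "\<forall>x\<in>S. x < Min B \<or> Max B < x"
  shows "ncns_on (S \<union> B) (insert B P)"
proof -
  have pa: "partition_on S P" using ncns_on_partition_on[OF nc] .
  have between: "x \<notin> S" if "y \<in> B" "w \<in> B" "y < x" "x < w" for x y w
    using outside that Min_le[OF fin] Max_ge[OF fin] by fastforce
  have dj: "disjnt B (\<Union>P)"
    using outside partition_onD1[OF pa] Min_le[OF fin] Max_ge[OF fin] by (force simp: disjnt_def)
  have "partition_on (S \<union> B) (insert B P)"
    using partition_on_insert[OF dj] pa ne dj partition_onD1[OF pa]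
    by (simp add: Un_Diff disjnt_def Diff_triv inf_commute)
  moreover have "noncrossing (insert B P)"
    unfolding noncrossing_def
  proof (intro ballI allI impI)
    fix B1 B2 a b c d
    assume B12: "B1 \<in> insert B P" "B2 \<in> insert B P"
      and h: "B1 \<noteq> B2 \<and> a < b \<and> b < c \<and> c < d \<and> a \<in> B1 \<and> c \<in> B1 \<and> b \<in> B2 \<and> d \<in> B2"
    have sub: "B' \<in> P \<Longrightarrow> B' \<subseteq> S" for B' using partition_onD1[OF pa] by blast
    consider "B1 = B" | "B2 = B" | "B1 \<in> P" "B2 \<in> P" using B12 by blast
    then show False
    proof cases
      case 1
      then show False using between[of a c b] h B12 sub by auto
    next
      case 2
      then show False using between[of b d c] h B12 sub by auto
    next
      case 3
      then show False using nc h unfolding ncns_on_def noncrossing_def by blast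
    qed
  qed
  ultimately show ?thesis using nc ns by (auto simp: ncns_on_def)
qed

definition first_closing :: "(nat \<Rightarrow> role) \<Rightarrow> nat set \<Rightarrow> nat" where
  "first_closing R S = Min {k\<in>S. R k = Closing}"

definition innermost_block :: "(nat \<Rightarrow> role) \<Rightarrow> nat set \<Rightarrow> nat set" where
  "innermost_block R S =
    {k\<in>S. Max {j\<in>S. j \<le> first_closing R S \<and> R j = Opening} \<le> k \<and> k \<le> first_closing R S}"

lemma innermost_block_cong:
  assumes "\<And>i. i \<in> S \<Longrightarrow> R i = R' i"
  shows "innermost_block R S = innermost_block R' S"
proof -
  have "{k\<in>S. R k = Closing} = {k\<in>S. R' k = Closing}"
    "\<And>c. {j\<in>S. j \<le> c \<and> R j = Opening} = {j\<in>S. j \<le> c \<and> R' j = Opening}"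
    using assms by auto
  then show ?thesis unfolding innermost_block_def first_closing_def by simp
qed

lemma block_eq_interval_if_closes_first:
  assumes nc: "ncns_on S P" and fin: "finite S" and B: "B \<in> P"
    and first: "\<And>k. k \<in> S \<Longrightarrow> block_role P k = Closing \<Longrightarrow> Max B \<le> k"
  shows "B = {k\<in>S. Min B \<le> k \<and> k \<le> Max B}"
proof -
  have pa: "partition_on S P" using ncns_on_partition_on[OF nc] .
  have finB: "finite B" and neB: "B \<noteq> {}"
    using partition_on_finite_block[OF pa fin B] partition_on_block_nonempty[OF pa B] .
  have "k \<in> B" if k: "k \<in> S" "Min B \<le> k" "k \<le> Max B" for k
  proof (rule ccontr)
    assume "k \<notin> B"
    obtain B' where B': "B' \<in> P" "k \<in> B'" using k(1) partition_onD1[OF pa] by blast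
    have finB': "finite B'" and neB': "B' \<noteq> {}"
      using partition_on_finite_block[OF pa fin B'(1)] partition_on_block_nonempty[OF pa B'(1)] .
    have "B' \<noteq> B" using B'(2) \<open>k \<notin> B\<close> by blast
    have "Max B \<le> Max B'"
      using first block_role_Min_Max(2)[OF nc fin B'(1)] Max_in[OF finB' neB']
        partition_on_block_subset[OF pa B'(1)] by blast
    moreover have "Max B \<noteq> Max B'"
      using partition_on_block_disjoint[OF pa B B'(1)] Max_in[OF finB neB] Max_in[OF finB' neB']
        \<open>B' \<noteq> B\<close> by metis
    moreover have "Min B \<noteq> k" "k \<noteq> Max B"
      using Min_in[OF finB neB] Max_in[OF finB neB] \<open>k \<notin> B\<close> by auto
    ultimately have "Min B < k \<and> k < Max B \<and> Max B < Max B'" using k by auto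
    then show False
      using nc B B'(1) \<open>B' \<noteq> B\<close> B'(2) Min_in[OF finB neB] Max_in[OF finB neB] Max_in[OF finB' neB']
      unfolding ncns_on_def noncrossing_def by blast
  qed
  then show ?thesis using partition_on_block_subset[OF pa B] Min_le[OF finB] Max_ge[OF finB] by auto
qed

lemma innermost_block_mem:
  assumes nc: "ncns_on S P" and fin: "finite S" and ne: "S \<noteq> {}"
  shows "innermost_block (block_role P) S \<in> P"
proof -
  have pa: "partition_on S P" using ncns_on_partition_on[OF nc] .
  define C where "C = {k\<in>S. block_role P k = Closing}"
  obtain B0 where B0: "B0 \<in> P" using ne partition_onD1[OF pa] by blast
  then have "Max B0 \<in> C"
    using block_role_Min_Max(2)[OF nc fin B0] partition_on_block_subset[OF pa B0]
      Max_in[OF partition_on_finite_block[OF pa fin B0] partition_on_block_nonempty[OF pa B0]]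
    unfolding C_def by auto
  moreover have "finite C" using fin unfolding C_def by simp
  ultimately have c: "first_closing (block_role P) S \<in> C" (is "?c \<in> C")
    unfolding first_closing_def C_def[symmetric] using Min_in by blast
  obtain B where B: "B \<in> P" "?c \<in> B" using c partition_onD1[OF pa] unfolding C_def by blast
  have finB: "finite B" and neB: "B \<noteq> {}"
    using partition_on_finite_block[OF pa fin B(1)] partition_on_block_nonempty[OF pa B(1)] .
  have c_Max: "?c = Max B"
    using c block_role_in_block[OF pa B] unfolding C_def by (auto split: if_splits)
  have "Max B \<le> k" if "k \<in> S" "block_role P k = Closing" for k
    using Min_le[OF \<open>finite C\<close>, of k] that c_Max unfolding first_closing_def C_def by simp
  then have B_eq: "B = {k\<in>S. Min B \<le> k \<and> k \<le> ?c}"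
    unfolding c_Max by (rule block_eq_interval_if_closes_first[OF nc fin B(1)])
  have last_opening: "Max {j\<in>S. j \<le> ?c \<and> block_role P j = Opening} = Min B"
  proof (rule Max_eqI)
    show "Min B \<in> {j\<in>S. j \<le> ?c \<and> block_role P j = Opening}"
      using partition_on_block_subset[OF pa B(1)] Min_in[OF finB neB] Min_le[OF finB B(2)]
        block_role_Min_Max(1)[OF nc fin B(1)] by auto
  next
    fix j assume j: "j \<in> {j\<in>S. j \<le> ?c \<and> block_role P j = Opening}"
    show "j \<le> Min B"
    proof (rule ccontr)
      assume "\<not> j \<le> Min B"
      then have "j \<in> B" using B_eq[THEN eqset_imp_iff, of j] j by simp
      then show False
        using block_role_in_block[OF pa B(1)] j \<open>\<not> j \<le> Min B\<close> by (auto split: if_splits)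
    qed
  qed (use fin in simp)
  have "innermost_block (block_role P) S = B"
    unfolding innermost_block_def last_opening by (rule B_eq[symmetric])
  then show ?thesis using B(1) by simp
qed

lemma ncns_on_eqI:
  "finite S \<Longrightarrow> ncns_on S P \<Longrightarrow> ncns_on S Q \<Longrightarrow> (\<And>i. i \<in> S \<Longrightarrow> block_role P i = block_role Q i)
    \<Longrightarrow> P = Q"
proof (induction "card S" arbitrary: S P Q rule: less_induct)
  case less
  show ?case
  proof (cases "S = {}")
    case True
    then show ?thesis using less.prems by (simp add: ncns_on_def partition_on_empty)
  next
    case False
    define B where "B = innermost_block (block_role P) S"
    have BP: "B \<in> P" using innermost_block_mem[OF less.prems(2,1) False] by (simp add: B_def)
    have BQ: "B \<in> Q"
      using innermost_block_mem[OF less.prems(3,1) False] innermost_block_cong[OF less.prems(4)]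
      by (simp add: B_def)
    have P': "ncns_on (S - B) (P - {B})" and Q': "ncns_on (S - B) (Q - {B})"
      using ncns_on_Diff_block less.prems(2,3) BP BQ by blast+
    have pa: "partition_on S P" "partition_on S Q" using less.prems(2,3) ncns_on_partition_on by blast+
    have "card (S - B) < card S"
      using less.prems(1) partition_on_block_nonempty[OF pa(1) BP] partition_on_block_subset[OF pa(1) BP]
      by (intro psubset_card_mono) auto
    moreover have "block_role (P - {B}) i = block_role (Q - {B}) i" if "i \<in> S - B" for i
      using that less.prems(4)[of i] ncns_on_partition_on[OF P'] ncns_on_partition_on[OF Q']
        block_role_subpartition[OF _ pa(1), of "S - B" "P - {B}" i]
        block_role_subpartition[OF _ pa(2), of "S - B" "Q - {B}" i] by auto
    ultimately have "P - {B} = Q - {B}"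
      using less.hyps[of "S - B" "P - {B}" "Q - {B}"] less.prems(1) P' Q' by simp
    then show ?thesis using BP BQ by blast
  qed
qed

(* The rightmost operator acts first on \<Omega>; the height is the length of the resulting simple
   tensor, and None records that the vector has become 0. *)
fun height_step :: "role \<Rightarrow> nat option \<Rightarrow> nat option" where
  "height_step t None = None"
| "height_step Closing (Some h) = Some (Suc h)"
| "height_step Opening (Some h) = (if h = 0 then None else Some (h - 1))"
| "height_step Middle (Some h) = (if h = 0 then None else Some h)"

definition balanced :: "role list \<Rightarrow> bool" where
  "balanced ts \<longleftrightarrow> foldr height_step ts (Some 0) = Some 0"

lemma foldr_height_step_None: "foldr height_step ts None = None"
  by (induction ts) auto

lemma foldr_height_step_Middles: "foldr height_step (replicate r Middle) (Some (Suc h)) = Some (Suc h)"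
  by (induction r) (auto simp del: foldr_replicate)

lemma foldr_height_step_no_Closing:
  "Closing \<notin> set ts \<Longrightarrow> ts \<noteq> [] \<Longrightarrow> foldr height_step ts (Some 0) = None"
proof (induction ts)
  case (Cons t ts)
  then show ?case by (cases t; cases ts) (auto simp: foldr_height_step_None)
qed simp

lemma foldr_height_step_arc:
  "foldr height_step (Opening # replicate r Middle @ Closing # zs) s = foldr height_step zs s"
  by (cases "foldr height_step zs s")
    (simp_all add: foldr_height_step_None foldr_height_step_Middles del: foldr_replicate)

lemma balanced_remove_arc:
  "balanced (xs @ Opening # replicate r Middle @ Closing # zs) \<longleftrightarrow> balanced (xs @ zs)"
  unfolding balanced_def foldr_append comp_def foldr_height_step_arc ..

lemma balanced_obtain_arc:
  assumes bal: "balanced ts" and ne: "ts \<noteq> []"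
  obtains xs r zs where "ts = xs @ Opening # replicate r Middle @ Closing # zs"
proof -
  have "Closing \<in> set ts"
    using bal ne foldr_height_step_no_Closing by (metis balanced_def option.distinct(1))
  then obtain ys zs where ts: "ts = ys @ Closing # zs" and ys: "Closing \<notin> set ys"
    by (metis split_list_first)
  have "Opening \<in> set ys"
  proof (rule ccontr)
    assume "Opening \<notin> set ys"
    then have "ys = replicate (length ys) Middle"
      using ys by (metis replicate_length_same role.exhaust)
    then have "foldr height_step ts (Some 0) =
        foldr height_step (replicate (length ys) Middle) (height_step Closing (foldr height_step zs (Some 0)))"
      unfolding ts by (metis foldr_append foldr_Cons comp_apply)
    then show False
      using bal unfolding balanced_def
      by (cases "foldr height_step zs (Some 0)")
        (simp_all add: foldr_height_step_None foldr_height_step_Middles del: foldr_replicate)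
  qed
  then obtain xs ms where ys_eq: "ys = xs @ Opening # ms" and ms: "Opening \<notin> set ms"
    by (metis split_list_last)
  have "ms = replicate (length ms) Middle"
    using ms ys ys_eq by (metis Un_iff list.set_intros(2) replicate_length_same role.exhaust set_append)
  then show ?thesis using that ts ys_eq by (metis append.assoc append_Cons)
qed

lemma ncns_on_insert_arc:
  assumes nc: "ncns_on (set (xs @ zs)) P" and sorted: "sorted_wrt (<) (xs @ a # ms @ z # zs)"
  defines "B \<equiv> set (a # ms @ [z])"
  shows "ncns_on (set (xs @ a # ms @ z # zs)) (insert B P)"
    and "map (block_role (insert B P)) (xs @ a # ms @ z # zs)
           = map (block_role P) xs @ Opening # replicate (length ms) Middle @ Closing # map (block_role P) zs"
proof -
  have order: "\<forall>x\<in>set xs. x < a" "\<forall>y\<in>set ms. a < y \<and> y < z" "a < z" "\<forall>x\<in>set zs. z < x"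
    using sorted by (auto simp: sorted_wrt_append)
  have fin: "finite B" and ne: "B \<noteq> {}" unfolding B_def by simp_all
  have Min_B: "Min B = a" using order unfolding B_def by (intro Min_eqI) auto
  have Max_B: "Max B = z" using order unfolding B_def by (intro Max_eqI) auto
  have "\<not> (\<exists>x. B = {x})" using order(3) unfolding B_def by auto
  moreover have "\<forall>x\<in>set (xs @ zs). x < Min B \<or> Max B < x" using order Min_B Max_B by auto
  ultimately have nc': "ncns_on (set (xs @ zs) \<union> B) (insert B P)"
    using ncns_on_insert_interval[OF nc fin ne] by blast
  moreover have "set (xs @ zs) \<union> B = set (xs @ a # ms @ z # zs)" unfolding B_def by auto
  ultimately show "ncns_on (set (xs @ a # ms @ z # zs)) (insert B P)" by simp
  have pa: "partition_on (set (xs @ zs)) P" and pa': "partition_on (set (xs @ zs) \<union> B) (insert B P)"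
    using ncns_on_partition_on nc nc' by blast+
  have outer: "block_role (insert B P) x = block_role P x" if "x \<in> set (xs @ zs)" for x
    using block_role_subpartition[OF pa pa' _ that] by blast
  have inner: "block_role (insert B P) x = (if x = a then Opening else if x = z then Closing else Middle)"
    if "x \<in> B" for x
    using block_role_in_block[OF pa' insertI1 that] Min_B Max_B by simp
  have "map (block_role (insert B P)) ms = replicate (length ms) Middle"
    using inner order(2,3) unfolding B_def by (auto intro!: replicate_eqI)
  then show "map (block_role (insert B P)) (xs @ a # ms @ z # zs)
      = map (block_role P) xs @ Opening # replicate (length ms) Middle @ Closing # map (block_role P) zs"
    using outer inner order(3) unfolding B_def by simp
qed

lemma balanced_block_roles_realizable:
  "balanced ts \<Longrightarrow> sorted_wrt (<) ps \<Longrightarrow> length ps = length ts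
    \<Longrightarrow> \<exists>P. ncns_on (set ps) P \<and> map (block_role P) ps = ts"
proof (induction "length ts" arbitrary: ts ps rule: less_induct)
  case less
  show ?case
  proof (cases "ts = []")
    case True
    then show ?thesis
      using less.prems by (intro exI[of _ "{}"]) (simp add: ncns_on_def partition_on_empty noncrossing_def)
  next
    case False
    then obtain xs r zs where ts: "ts = xs @ Opening # replicate r Middle @ Closing # zs"
      using balanced_obtain_arc[OF less.prems(1)] by blast
    have "list_all2 (\<lambda>_ _. True) ps ts" using less.prems(3) by (simp add: list_all2_conv_all_nth)
    then obtain pxs a ms z pzs where ps: "ps = pxs @ a # ms @ z # pzs"
      and len: "length pxs = length xs" "length ms = r" "length pzs = length zs"
      unfolding ts by (auto simp: list_all2_append2 list_all2_Cons2 dest: list_all2_lengthD)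
    have "balanced (xs @ zs)" using less.prems(1) unfolding ts balanced_remove_arc .
    moreover have "sorted_wrt (<) (pxs @ pzs)" using less.prems(2) unfolding ps by (simp add: sorted_wrt_append)
    ultimately obtain P where P: "ncns_on (set (pxs @ pzs)) P" "map (block_role P) (pxs @ pzs) = xs @ zs"
      using less.hyps[of "xs @ zs" "pxs @ pzs"] len unfolding ts by auto
    then have "map (block_role P) pxs = xs" "map (block_role P) pzs = zs" using len by auto
    then show ?thesis
      using ncns_on_insert_arc[OF P(1) less.prems(2)[unfolded ps]] len unfolding ps ts by auto
  qed
qed

lemma UNIV_role: "(UNIV :: role set) = {Opening, Closing, Middle}"
  using role.exhaust by blast

instance role :: finite
  by standard (simp add: UNIV_role)

lemma sum_NC_ns_block_roles:
  fixes V :: "role list \<Rightarrow> 'a::comm_monoid_add"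
  assumes unbalanced: "\<And>ts. length ts = n \<Longrightarrow> \<not> balanced ts \<Longrightarrow> V ts = 0"
  shows "(\<Sum>P\<in>NC_ns n. V (map (block_role P) [1..<Suc n])) = (\<Sum>ts | length ts = n. V ts)"
proof -
  define roles where "roles P = map (block_role P) [1..<Suc n]" for P
  have positions: "set [1..<Suc n] = {1..n}" by auto
  have inj: "inj_on roles (NC_ns n)"
  proof (rule inj_onI)
    fix P Q assume P: "P \<in> NC_ns n" and Q: "Q \<in> NC_ns n" and eq: "roles P = roles Q"
    have "block_role P i = block_role Q i" if "i \<in> {1..n}" for i
      using eq that positions unfolding roles_def map_eq_conv by blast
    then show "P = Q" using ncns_on_eqI[of "{1..n}" P Q] P Q unfolding NC_ns_iff_ncns_on by simp
  qed
  have vanish: "V ts = 0" if "length ts = n" "ts \<notin> roles ` NC_ns n" for ts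
  proof (rule ccontr)
    assume "V ts \<noteq> 0"
    then have "balanced ts" using unbalanced that(1) by blast
    moreover have "length [1..<Suc n] = length ts" using that(1) by simp
    ultimately obtain P where P: "ncns_on (set [1..<Suc n]) P" and "roles P = ts"
      using balanced_block_roles_realizable[OF _ sorted_wrt_upt] unfolding roles_def by blast
    moreover have "P \<in> NC_ns n" using P unfolding NC_ns_iff_ncns_on positions .
    ultimately show False using that(2) by blast
  qed
  have "finite {ts :: role list. length ts = n}"
    using finite_lists_length_eq[of "UNIV :: role set" n] by simp
  moreover have "roles ` NC_ns n \<subseteq> {ts. length ts = n}" unfolding roles_def by auto
  ultimately have "(\<Sum>ts\<in>roles ` NC_ns n. V ts) = (\<Sum>ts | length ts = n. V ts)"
    using vanish by (intro sum.mono_neutral_left) auto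
  then show ?thesis using sum.reindex[OF inj, of V] unfolding roles_def by simp
qed

lemma sum_lists_length_Suc:
  fixes g :: "'r::finite list \<Rightarrow> 'a::comm_monoid_add"
  shows "(\<Sum>ts | length ts = Suc m. g ts) = (\<Sum>t\<in>UNIV. \<Sum>ts | length ts = m. g (t # ts))"
proof -
  have "{ts :: 'r list. length ts = Suc m} = (\<lambda>(ts, t). t # ts) ` ({ts. length ts = m} \<times> UNIV)"
    using lists_length_Suc_eq[of UNIV m] by simp
  moreover have "inj_on (\<lambda>(ts, t). t # ts) ({ts :: 'r list. length ts = m} \<times> UNIV)"
    by (auto intro: inj_onI)
  ultimately have "(\<Sum>ts | length ts = Suc m. g ts) = (\<Sum>(ts, t) \<in> {ts. length ts = m} \<times> UNIV. g (t # ts))"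
    by (simp add: sum.reindex case_prod_beta')
  also have "\<dots> = (\<Sum>ts | length ts = m. \<Sum>t\<in>UNIV. g (t # ts))"
    by (rule sum.cartesian_product[symmetric])
  also have "\<dots> = (\<Sum>t\<in>UNIV. \<Sum>ts | length ts = m. g (t # ts))"
    by (rule sum.swap)
  finally show ?thesis .
qed

definition vacuum_coeff :: "'b fvec \<Rightarrow> complex" where
  "vacuum_coeff v = (\<Sum>p\<leftarrow>v. if snd p = [] then fst p else 0)"

lemma vacuum_coeff_append: "vacuum_coeff (v @ w) = vacuum_coeff v + vacuum_coeff w"
  by (simp add: vacuum_coeff_def)

lemma word_inner_Nil_right: "word_inner sc st phi gam w [] = (if w = [] then 1 else 0)"
  by (cases w) auto

lemma fock_inner_vac: "fock_inner sc st phi gam v vac = vacuum_coeff v"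
  by (induction v) (auto simp: fock_inner_def vac_def vacuum_coeff_def word_inner_Nil_right)

context
  fixes sc :: "complex \<Rightarrow> 'b::ring_1 \<Rightarrow> 'b" and st :: "'b \<Rightarrow> 'b" and phi :: "'b \<Rightarrow> complex"
    and gam :: "'b \<Rightarrow> 'b" and Lam :: "'b \<Rightarrow> 'b \<Rightarrow> 'b"
begin

definition role_op :: "role \<Rightarrow> 'b \<Rightarrow> 'b fvec \<Rightarrow> 'b fvec" where
  "role_op t b = (case t of Opening \<Rightarrow> ann sc st phi gam b | Closing \<Rightarrow> cre b | Middle \<Rightarrow> pres Lam b)"

lemma role_op_append: "role_op t b (v @ w) = role_op t b v @ role_op t b w"
  by (cases t) (simp_all add: role_op_def cre_def ann_def pres_def lin_ext_def)

lemma role_op_Nil: "role_op t b [] = []"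
  by (cases t) (simp_all add: role_op_def cre_def ann_def pres_def lin_ext_def)

lemma Xop_eq_role_ops:
  "Xop sc st phi gam Lam b v = role_op Closing b v @ role_op Opening b v @ role_op Middle b v"
  by (simp add: Xop_def role_op_def)

definition role_product :: "(nat \<Rightarrow> 'b) \<Rightarrow> role list \<Rightarrow> nat list \<Rightarrow> 'b fvec \<Rightarrow> 'b fvec" where
  "role_product u ts is = op_prod (map (\<lambda>(t, i). role_op t (u i)) (zip ts is))"

lemma role_product_Nil: "role_product u [] is v = v"
  by (simp add: role_product_def op_prod_def)

lemma role_product_Cons: "role_product u (t # ts) (i # is) v = role_op t (u i) (role_product u ts is v)"
  by (simp add: role_product_def op_prod_def)

lemma WM_op_eq_role_op: "WM_op sc st phi gam Lam P i b = role_op (block_role P i) b"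
  by (simp add: WM_op_def block_role_def role_op_def)

lemma role_product_block_roles:
  "role_product u (map (block_role P) is) is v = op_prod (map (\<lambda>i. WM_op sc st phi gam Lam P i (u i)) is) v"
  by (simp add: role_product_def WM_op_eq_role_op zip_map1 zip_same_conv_map comp_def)

lemma additive_Xop_product_eq_sum:
  fixes F :: "'b fvec \<Rightarrow> 'a::comm_monoid_add"
  assumes additive: "\<And>v w. F (v @ w) = F v + F w"
  shows "F (op_prod (map (\<lambda>i. Xop sc st phi gam Lam (u i)) is) v)
    = (\<Sum>ts | length ts = length is. F (role_product u ts is v))"
  using additive
proof (induction "is" arbitrary: F)
  case Nil
  have "{ts :: role list. length ts = 0} = {[]}" by auto
  then show ?case by (simp add: op_prod_def role_product_Nil)
next
  case (Cons i "is")
  let ?w = "op_prod (map (\<lambda>i. Xop sc st phi gam Lam (u i)) is) v"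
  have IH: "F (role_op t (u i) ?w) = (\<Sum>ts | length ts = length is. F (role_op t (u i) (role_product u ts is v)))"
    for t using Cons.IH[of "\<lambda>v. F (role_op t (u i) v)"] by (simp add: role_op_append Cons.prems)
  have "F (op_prod (map (\<lambda>i. Xop sc st phi gam Lam (u i)) (i # is)) v)
      = (\<Sum>t\<in>UNIV. F (role_op t (u i) ?w))"
    by (simp add: op_prod_def Xop_eq_role_ops Cons.prems UNIV_role add_ac)
  also have "\<dots> = (\<Sum>ts | length ts = length (i # is). F (role_product u ts (i # is) v))"
    by (simp add: IH sum_lists_length_Suc role_product_Cons)
  finally show ?case .
qed

lemma role_product_vac:
  "length ts = length is \<Longrightarrow> role_product u ts is vac = [] \<or>
    (\<exists>c w. role_product u ts is vac = [(c, w)] \<and> foldr height_step ts (Some 0) = Some (length w))"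
proof (induction ts "is" rule: list_induct2)
  case Nil
  then show ?case by (simp add: role_product_Nil vac_def)
next
  case (Cons t ts i "is")
  show ?case
  proof (cases "role_product u ts is vac = []")
    case True
    then show ?thesis by (simp add: role_product_Cons role_op_Nil)
  next
    case False
    then obtain c w where R: "role_product u ts is vac = [(c, w)]"
      and h: "foldr height_step ts (Some 0) = Some (length w)"
      using Cons.IH by blast
    show ?thesis
      using R h by (cases t; cases w rule: remdups_adj.cases)
        (auto simp: role_product_Cons role_op_def cre_def ann_def pres_def lin_ext_def)
  qed
qed

lemma vacuum_coeff_role_product_unbalanced:
  assumes "length ts = length is" "\<not> balanced ts"
  shows "vacuum_coeff (role_product u ts is vac) = 0"
  using role_product_vac[OF assms(1), of u] assms(2)
  by (auto simp: vacuum_coeff_def balanced_def)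

end

theorem proposition3p2:
  fixes sc :: "complex \<Rightarrow> 'b::ring_1 \<Rightarrow> 'b"
    and st :: "'b \<Rightarrow> 'b"
    and phi :: "'b \<Rightarrow> complex"
    and gam :: "'b \<Rightarrow> 'b"
    and Lam :: "'b \<Rightarrow> 'b \<Rightarrow> 'b"
  assumes alg: "star_alg sc st"
    and phi_lin: "star_linear_functional sc st phi"
    and gam_lin: "star_linear_map sc st gam"
    and Lam_lin: "star_bilinear_map sc st Lam"
    and phi_pos: "positive_functional st phi"
    and phi_faithful: "faithful_functional st phi"
    and cp: "completely_positive st (gp sc phi gam)"
    and phi_adj: "\<And>b u v. phi (st v * Lam b u) = phi (st (Lam (st b) v) * u)"
    and gam_adj: "\<And>b u v. gam (st v * Lam b u) = gam (st (Lam (st b) v) * u)"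
  shows "(\<forall>n \<ge> 2. \<forall>u :: nat \<Rightarrow> 'b.
            fock_inner sc st phi gam
              (op_prod (map (\<lambda>i. Xop sc st phi gam Lam (u i)) [1..<Suc n]) vac) vac
          = (\<Sum>P\<in>NC_ns n. fock_inner sc st phi gam (WM sc st phi gam Lam n P u vac) vac))
      \<and> (\<forall>u1 :: 'b. fock_inner sc st phi gam (Xop sc st phi gam Lam u1 vac) vac = 0)"
proof (intro conjI allI impI)
  fix n :: nat and u :: "nat \<Rightarrow> 'b"
  let ?is = "[1..<Suc n]"
  have "fock_inner sc st phi gam (op_prod (map (\<lambda>i. Xop sc st phi gam Lam (u i)) ?is) vac) vac
      = (\<Sum>ts | length ts = length ?is. vacuum_coeff (role_product sc st phi gam Lam u ts ?is vac))"
    unfolding fock_inner_vac by (rule additive_Xop_product_eq_sum[where F = vacuum_coeff, OF vacuum_coeff_append])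
  also have "\<dots> = (\<Sum>P\<in>NC_ns n.
      vacuum_coeff (role_product sc st phi gam Lam u (map (block_role P) ?is) ?is vac))"
    unfolding length_upt diff_Suc_1
    by (rule sum_NC_ns_block_roles[symmetric]) (simp add: vacuum_coeff_role_product_unbalanced)
  also have "\<dots> = (\<Sum>P\<in>NC_ns n. fock_inner sc st phi gam (WM sc st phi gam Lam n P u vac) vac)"
    by (simp add: fock_inner_vac WM_def role_product_block_roles)
  finally show "fock_inner sc st phi gam (op_prod (map (\<lambda>i. Xop sc st phi gam Lam (u i)) ?is) vac) vac
      = (\<Sum>P\<in>NC_ns n. fock_inner sc st phi gam (WM sc st phi gam Lam n P u vac) vac)" .
next
  fix u1 :: 'b
  show "fock_inner sc st phi gam (Xop sc st phi gam Lam u1 vac) vac = 0"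
    unfolding fock_inner_vac by (simp add: Xop_def cre_def ann_def pres_def lin_ext_def vac_def vacuum_coeff_def)
qed

end
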